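(* Let $n\ge 2$ and let $A$ be an $n\times n$ real matrix with a real eigenpair $(\lambda,v)$ such that $v$ has no zero components, and let $D=\mathrm{diag}(v)$. Then for every $p\in\mathbb{N}\cup\{\infty\}$ and every $k\in\mathbb{N}$, $$|\det(A)|\le|\lambda|\,\big[\tau_p(D^{-1}A^kD)\big]^{\frac{n-1}{k}}.$$ In particular, $|\det(A)|\le|\lambda|\,\tau_p(D^{-1}A^{n-1}D)$.
   Context: For an $n\times n$ real matrix $M$ ($n\ge 2$) and $p\in\mathbb{N}\cup\{\infty\}$, define $$\tau_p(M)=\max\{\|M^Tx\|_p: x\in\mathbb{R}^n,\ x^Te=0,\ \|x\|_p=1\},$$ where $e$ is the all-ones vector and $\|\cdot\|_p$ is the $\ell_p$-norm. *)

theory Defs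
  imports "HOL-Analysis.Analysis" "HOL-Library.Extended_Nat"
begin

definition lpnorm :: "enat \<Rightarrow> real^'n \<Rightarrow> real" where
  "lpnorm p x = (case p of
      enat q \<Rightarrow> (\<Sum>i\<in>UNIV. \<bar>x $ i\<bar> powr real q) powr (1 / real q)
    | \<infinity> \<Rightarrow> Max {\<bar>x $ i\<bar> | i. True})"

definition tau :: "enat \<Rightarrow> real^'n^'n \<Rightarrow> real" where
  "tau p M = Sup {lpnorm p (transpose M *v x) | x. sum (\<lambda>i. x $ i) UNIV = 0 \<and> lpnorm p x = 1}"

definition diagm :: "real^'n \<Rightarrow> real^'n^'n" where
  "diagm v = (\<chi> i j. if i = j then v $ i else 0)"

primrec matpow :: "real^'n^'n \<Rightarrow> nat \<Rightarrow> real^'n^'n" where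
  "matpow A 0 = mat 1"
| "matpow A (Suc k) = A ** matpow A k"

end

theory Submission
  imports Defs
begin

text \<open>If every row of \<open>M\<close> sums to \<open>\<mu>\<close>, i.e. \<open>M e = \<mu> e\<close> for the all-ones vector \<open>e\<close>, then
  \<open>M\<^sup>T\<close> maps the hyperplane of zero-sum vectors into itself and \<open>\<tau>\<^sub>p(M)\<close> bounds its operator norm
  there. Conjugating \<open>M\<^sup>m\<close> by a shear that sends \<open>e\<^sub>j\<^sub>0\<close> to \<open>e\<close> produces a matrix whose column
  \<open>j0\<close> is \<open>\<mu>\<^sup>m e\<^sub>j\<^sub>0\<close> and whose remaining entries are entries of \<open>(M\<^sup>m)\<^sup>T (e\<^sub>i - e\<^sub>j\<^sub>0)\<close>, hence
  \<open>O(\<tau>\<^sub>p(M)\<^sup>m)\<close>. The Leibniz expansion then gives \<open>|det M|\<^sup>m \<le> C (|\<mu>| \<tau>\<^sub>p(M)\<^sup>n\<^sup>-\<^sup>1)\<^sup>m\<close> with \<open>C\<close>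
  independent of \<open>m\<close>, and letting \<open>m \<rightarrow> \<infinity>\<close> removes \<open>C\<close>. For the corollary, \<open>D\<^sup>-\<^sup>1 A\<^sup>k D\<close> has row
  sums \<open>\<lambda>\<^sup>k\<close> (as \<open>D e = v\<close>) and determinant \<open>det(A)\<^sup>k\<close>; it remains to take \<open>k\<close>-th roots.\<close>

lemma enat_ge_1_cases [consumes 1, case_names infinity enat]:
  assumes "(p::enat) \<ge> 1"
  obtains (infinity) "p = \<infinity>" | (enat) q where "p = enat q" "q \<ge> 1"
  using assms by (cases p) (auto simp: one_enat_def)

lemma lpnorm_infinity: "lpnorm \<infinity> x = (MAX i. \<bar>x $ i\<bar>)"
  by (simp add: lpnorm_def full_SetCompr_eq)

lemma lpnorm_enat: "lpnorm (enat q) x = (\<Sum>i\<in>UNIV. \<bar>x $ i\<bar> powr real q) powr (1 / real q)"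
  by (simp add: lpnorm_def)

lemma abs_component_le_lpnorm:
  assumes "p \<ge> 1"
  shows "\<bar>x $ i\<bar> \<le> lpnorm p x"
  using assms
proof (cases rule: enat_ge_1_cases)
  case infinity
  then show ?thesis by (simp add: lpnorm_infinity)
next
  case (enat q)
  have "\<bar>x $ i\<bar> = (\<bar>x $ i\<bar> powr real q) powr (1 / real q)"
    using enat by (simp add: powr_powr)
  also have "\<dots> \<le> (\<Sum>j\<in>UNIV. \<bar>x $ j\<bar> powr real q) powr (1 / real q)"
    by (rule powr_mono2) (use enat in \<open>auto intro!: member_le_sum\<close>)
  finally show ?thesis
    using enat by (simp add: lpnorm_enat)
qed

lemma lpnorm_nonneg: "p \<ge> 1 \<Longrightarrow> lpnorm p x \<ge> 0"
  using abs_component_le_lpnorm abs_ge_zero order_trans by blast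

lemma lpnorm_scaleR:
  assumes "p \<ge> 1"
  shows "lpnorm p (c *\<^sub>R x) = \<bar>c\<bar> * lpnorm p x"
  using assms
proof (cases rule: enat_ge_1_cases)
  case infinity
  have "mono (\<lambda>y::real. \<bar>c\<bar> * y)"
    by (auto intro!: monoI mult_left_mono)
  then have "\<bar>c\<bar> * (MAX i. \<bar>x $ i\<bar>) = (MAX i. \<bar>c\<bar> * \<bar>x $ i\<bar>)"
    by (subst mono_Max_commute) (auto simp: image_image)
  then show ?thesis
    using infinity by (simp add: lpnorm_infinity abs_mult)
next
  case (enat q)
  have "(\<Sum>i\<in>UNIV. \<bar>(c *\<^sub>R x) $ i\<bar> powr real q) = \<bar>c\<bar> powr real q * (\<Sum>i\<in>UNIV. \<bar>x $ i\<bar> powr real q)"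
    by (simp add: abs_mult powr_mult sum_distrib_left)
  then show ?thesis
    using enat by (simp add: lpnorm_enat powr_mult powr_powr)
qed

lemma lpnorm_eq_0_iff:
  assumes "p \<ge> 1"
  shows "lpnorm p x = 0 \<longleftrightarrow> x = 0"
proof
  show "lpnorm p x = 0 \<Longrightarrow> x = 0"
    using abs_component_le_lpnorm[OF assms, of x] by (fastforce simp: vec_eq_iff)
  show "x = 0 \<Longrightarrow> lpnorm p x = 0"
    using lpnorm_scaleR[OF assms, of 0 x] by simp
qed

lemma lpnorm_le_card_mult:
  fixes x :: "real^'n"
  assumes p: "p \<ge> 1" and bound: "\<And>i. \<bar>x $ i\<bar> \<le> b"
  shows "lpnorm p x \<le> real CARD('n) * b"
proof -
  have b: "b \<ge> 0"
    using bound abs_ge_zero order_trans by blast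
  show ?thesis
    using p
  proof (cases rule: enat_ge_1_cases)
    case infinity
    have "lpnorm p x \<le> b"
      using infinity bound by (simp add: lpnorm_infinity)
    also have "b \<le> real CARD('n) * b"
      using b by (simp add: mult_le_cancel_right1)
    finally show ?thesis .
  next
    case (enat q)
    have "(\<Sum>i\<in>UNIV. \<bar>x $ i\<bar> powr real q) \<le> (\<Sum>i\<in>(UNIV::'n set). b powr real q)"
      by (intro sum_mono powr_mono2) (use bound in auto)
    then have "lpnorm p x \<le> (real CARD('n) * b powr real q) powr (1 / real q)"
      using enat by (simp add: lpnorm_enat powr_mono2 sum_nonneg)
    also have "\<dots> = real CARD('n) powr (1 / real q) * b"
      using enat b by (simp add: powr_mult powr_powr)
    also have "\<dots> \<le> real CARD('n) powr 1 * b"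
      by (intro mult_right_mono powr_mono) (use enat b in auto)
    finally show ?thesis
      by simp
  qed
qed

lemma lpnorm_mult_vector_le:
  fixes M :: "real^'n^'m"
  assumes "p \<ge> 1"
  shows "lpnorm p (M *v x) \<le> real CARD('m) * ((\<Sum>i\<in>UNIV. \<Sum>j\<in>UNIV. \<bar>M $ i $ j\<bar>) * lpnorm p x)"
proof (rule lpnorm_le_card_mult[OF assms])
  fix i
  have "\<bar>(M *v x) $ i\<bar> \<le> (\<Sum>j\<in>UNIV. \<bar>M $ i $ j\<bar> * \<bar>x $ j\<bar>)"
    unfolding matrix_vector_mult_def vec_lambda_beta abs_mult[symmetric] by (rule sum_abs)
  also have "\<dots> \<le> (\<Sum>j\<in>UNIV. \<bar>M $ i $ j\<bar>) * lpnorm p x"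
    unfolding sum_distrib_right by (intro sum_mono mult_left_mono abs_component_le_lpnorm assms) simp
  also have "\<dots> \<le> (\<Sum>i\<in>UNIV. \<Sum>j\<in>UNIV. \<bar>M $ i $ j\<bar>) * lpnorm p x"
    by (intro mult_right_mono member_le_sum lpnorm_nonneg[OF assms] sum_nonneg) simp_all
  finally show "\<bar>(M *v x) $ i\<bar> \<le> (\<Sum>i\<in>UNIV. \<Sum>j\<in>UNIV. \<bar>M $ i $ j\<bar>) * lpnorm p x" .
qed

lemma bdd_above_tau_set:
  fixes M :: "real^'n^'n"
  assumes "p \<ge> 1"
  shows "bdd_above {lpnorm p (transpose M *v x) | x. (\<Sum>i\<in>UNIV. x $ i) = 0 \<and> lpnorm p x = 1}"
proof (rule bdd_aboveI)
  fix s
  assume "s \<in> {lpnorm p (transpose M *v x) | x. (\<Sum>i\<in>UNIV. x $ i) = 0 \<and> lpnorm p x = 1}"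
  then obtain x where "s = lpnorm p (transpose M *v x)" "lpnorm p x = 1"
    by blast
  then show "s \<le> real CARD('n) * ((\<Sum>i\<in>UNIV. \<Sum>j\<in>UNIV. \<bar>transpose M $ i $ j\<bar>) * 1)"
    using lpnorm_mult_vector_le[OF assms, of "transpose M" x] by (simp only:)
qed

lemma lpnorm_transpose_mult_le_tau:
  fixes M :: "real^'n^'n"
  assumes p: "p \<ge> 1" and zero_sum: "(\<Sum>i\<in>UNIV. y $ i) = 0"
  shows "lpnorm p (transpose M *v y) \<le> tau p M * lpnorm p y"
proof (cases "y = 0")
  case True
  then show ?thesis
    using lpnorm_eq_0_iff[OF p, of "0::real^'n"] by simp
next
  case False
  define d where "d = lpnorm p y"
  have d: "d > 0"
    using False lpnorm_nonneg[OF p, of y] lpnorm_eq_0_iff[OF p, of y] by (simp add: d_def)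
  define u where "u = inverse d *\<^sub>R y"
  have "lpnorm p u = 1" "(\<Sum>i\<in>UNIV. u $ i) = 0"
    using d zero_sum by (simp_all add: u_def lpnorm_scaleR[OF p] d_def sum_distrib_left[symmetric])
  then have "lpnorm p (transpose M *v u) \<le> tau p M"
    unfolding tau_def by (intro cSup_upper bdd_above_tau_set p) blast
  moreover have "lpnorm p (transpose M *v u) = inverse d * lpnorm p (transpose M *v y)"
    using d by (simp add: u_def matrix_vector_mult_scaleR lpnorm_scaleR[OF p])
  ultimately show ?thesis
    using d by (simp add: d_def field_simps)
qed

lemma tau_nonneg:
  fixes M :: "real^'n^'n"
  assumes p: "p \<ge> 1" and card: "CARD('n) \<ge> 2"
  shows "tau p M \<ge> 0"
proof -
  obtain i j :: 'n where "i \<noteq> j"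
    using card by (meson card_2_iff' ex_card)
  define y where "y = axis i 1 - axis j (1::real)"
  have "(\<Sum>l\<in>UNIV. y $ l) = 0"
    by (simp add: y_def axis_def sum_subtractf)
  then have "0 \<le> tau p M * lpnorm p y"
    using lpnorm_transpose_mult_le_tau[OF p] lpnorm_nonneg[OF p] order_trans by blast
  moreover have "y \<noteq> 0"
    using \<open>i \<noteq> j\<close> by (auto simp: y_def vec_eq_iff axis_def)
  then have "lpnorm p y > 0"
    using lpnorm_nonneg[OF p, of y] lpnorm_eq_0_iff[OF p, of y] by simp
  ultimately show ?thesis
    by (simp add: zero_le_mult_iff)
qed

lemma row_sum_eq:
  fixes M :: "real^'n^'m"
  assumes "M *v vec 1 = \<mu> *\<^sub>R vec 1"
  shows "(\<Sum>j\<in>UNIV. M $ i $ j) = \<mu>"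
proof -
  have "(M *v vec 1) $ i = \<mu>"
    using assms by simp
  then show ?thesis
    by (simp add: matrix_vector_mult_def)
qed

lemma sum_transpose_mult_vector:
  fixes M :: "real^'n^'m"
  assumes "M *v vec 1 = \<mu> *\<^sub>R vec 1"
  shows "(\<Sum>j\<in>UNIV. (transpose M *v y) $ j) = \<mu> * (\<Sum>i\<in>UNIV. y $ i)"
proof -
  have "(\<Sum>j\<in>UNIV. (transpose M *v y) $ j) = (\<Sum>j\<in>UNIV. \<Sum>i\<in>UNIV. M $ i $ j * y $ i)"
    by (simp add: matrix_vector_mult_def transpose_def mult.commute)
  also have "\<dots> = (\<Sum>i\<in>UNIV. (\<Sum>j\<in>UNIV. M $ i $ j) * y $ i)"
    by (subst sum.swap) (simp add: sum_distrib_right)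
  finally show ?thesis
    by (simp add: row_sum_eq[OF assms] sum_distrib_left)
qed

lemma matpow_mult_eigenvector:
  assumes "A *v v = c *\<^sub>R v"
  shows "matpow A k *v v = (c ^ k) *\<^sub>R v"
  by (induction k) (simp_all add: matrix_vector_mul_assoc[symmetric] assms matrix_vector_mult_scaleR)

lemma det_matpow: "det (matpow A k) = det A ^ k"
  by (induction k) (simp_all add: det_mul)

lemma lpnorm_transpose_matpow_le_tau_power:
  fixes M :: "real^'n^'n"
  assumes p: "p \<ge> 1" and card: "CARD('n) \<ge> 2" and rows: "M *v vec 1 = \<mu> *\<^sub>R vec 1"
    and zero_sum: "(\<Sum>i\<in>UNIV. y $ i) = 0"
  shows "lpnorm p (transpose (matpow M k) *v y) \<le> tau p M ^ k * lpnorm p y"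
  using zero_sum
proof (induction k arbitrary: y)
  case 0
  then show ?case
    by simp
next
  case (Suc k)
  have "transpose (matpow M (Suc k)) *v y = transpose (matpow M k) *v (transpose M *v y)"
    by (simp only: matpow.simps matrix_transpose_mul matrix_vector_mul_assoc)
  moreover have "(\<Sum>i\<in>UNIV. (transpose M *v y) $ i) = 0"
    using sum_transpose_mult_vector[OF rows] Suc.prems by simp
  ultimately have "lpnorm p (transpose (matpow M (Suc k)) *v y) \<le> tau p M ^ k * lpnorm p (transpose M *v y)"
    using Suc.IH by presburger
  also have "\<dots> \<le> tau p M ^ k * (tau p M * lpnorm p y)"
    by (intro mult_left_mono lpnorm_transpose_mult_le_tau p Suc.prems zero_le_power tau_nonneg card)
  finally show ?case
    by (simp add: mult_ac)
qed

text \<open>\<open>shear j0 c = I + c (e - e\<^sub>j\<^sub>0) e\<^sub>j\<^sub>0\<^sup>T\<close>; in particular \<open>shear j0 1\<close> maps \<open>e\<^sub>j\<^sub>0\<close> to \<open>e\<close>.\<close>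

definition shear :: "'n \<Rightarrow> real \<Rightarrow> real^'n^'n" where
  "shear j0 c = (\<chi> i j. if i = j then 1 else if j = j0 then c else 0)"

lemma shear_mult_component:
  "(shear j0 c ** N) $ i $ j = N $ i $ j + (if i = j0 then 0 else c * N $ j0 $ j)"
proof -
  have "(shear j0 c ** N) $ i $ j
      = (\<Sum>l\<in>UNIV. (if l = i then N $ i $ j else 0) + (if l = j0 \<and> i \<noteq> j0 then c * N $ j0 $ j else 0))"
    unfolding matrix_matrix_mult_def shear_def vec_lambda_beta by (rule sum.cong) auto
  then show ?thesis
    by (simp add: sum.distrib)
qed

lemma mult_shear_component:
  "(N ** shear j0 c) $ i $ j = N $ i $ j + (if j = j0 then c * (\<Sum>l\<in>UNIV - {j0}. N $ i $ l) else 0)"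
proof -
  have "(N ** shear j0 c) $ i $ j
      = (\<Sum>l\<in>UNIV. (if l = j then N $ i $ j else 0) + (if j = j0 \<and> l \<noteq> j0 then c * N $ i $ l else 0))"
    unfolding matrix_matrix_mult_def shear_def vec_lambda_beta by (rule sum.cong) auto
  then show ?thesis
    by (simp add: sum.distrib sum.If_cases sum_distrib_left Collect_neg_eq Compl_eq_Diff_UNIV)
qed

lemma shear_mult_shear: "shear j0 a ** shear j0 b = shear j0 (a + b)"
  by (simp add: vec_eq_iff shear_mult_component) (simp add: shear_def algebra_simps)

lemma shear_zero: "shear j0 0 = mat 1"
  by (simp add: vec_eq_iff shear_def mat_def)

lemma det_conjugate:
  fixes P N Q :: "'a::comm_ring_1^'n^'n"
  assumes "P ** Q = mat 1"
  shows "det (P ** N ** Q) = det N"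
proof -
  have "det (P ** N ** Q) = det N * (det P * det Q)"
    by (simp add: det_mul ac_simps)
  also have "det P * det Q = 1"
    using assms det_mul[of P Q] by simp
  finally show ?thesis
    by simp
qed

lemma shear_conjugate_components:
  fixes N :: "real^'n^'n" and j0 :: 'n
  assumes rows: "N *v vec 1 = \<nu> *\<^sub>R vec 1"
  defines "X \<equiv> shear j0 (-1) ** N ** shear j0 1"
  shows "X $ j0 $ j0 = \<nu>"
    and "i \<noteq> j0 \<Longrightarrow> X $ i $ j0 = 0"
    and "i \<noteq> j0 \<Longrightarrow> j \<noteq> j0 \<Longrightarrow> X $ i $ j = N $ i $ j - N $ j0 $ j"
proof -
  have col: "(N ** shear j0 1) $ i $ j0 = \<nu>" for i
    using row_sum_eq[OF rows, of i] sum.remove[of UNIV j0 "\<lambda>l. N $ i $ l"]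
    by (simp add: mult_shear_component)
  show "X $ j0 $ j0 = \<nu>"
    by (simp add: X_def matrix_mul_assoc[symmetric] shear_mult_component col)
  show "i \<noteq> j0 \<Longrightarrow> X $ i $ j0 = 0"
    by (simp add: X_def matrix_mul_assoc[symmetric] shear_mult_component col)
  show "i \<noteq> j0 \<Longrightarrow> j \<noteq> j0 \<Longrightarrow> X $ i $ j = N $ i $ j - N $ j0 $ j"
    by (simp add: X_def matrix_mul_assoc[symmetric] shear_mult_component mult_shear_component)
qed

lemma transpose_mult_axis_diff:
  fixes N :: "real^'n^'m"
  shows "transpose N *v (axis i 1 - axis i' 1) = row i N - row i' N"
  by (simp only: matrix_vector_mult_diff_distrib matrix_vector_mult_basis column_transpose)

lemma abs_prod_permutation_le:
  fixes X :: "real^'n^'n"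
  assumes perm: "\<pi> permutes UNIV"
    and col: "\<And>i. i \<noteq> j0 \<Longrightarrow> X $ i $ j0 = 0"
    and bound: "\<And>i j. i \<noteq> j0 \<Longrightarrow> j \<noteq> j0 \<Longrightarrow> \<bar>X $ i $ j\<bar> \<le> K" and K: "K \<ge> 0"
  shows "\<bar>\<Prod>i\<in>UNIV. X $ i $ \<pi> i\<bar> \<le> \<bar>X $ j0 $ j0\<bar> * K ^ (CARD('n) - 1)"
proof (cases "\<pi> j0 = j0")
  case False
  obtain i where i: "\<pi> i = j0"
    using perm by (metis permutes_surj surjD)
  with False have "X $ i $ \<pi> i = 0"
    using col by (metis)
  then have "(\<Prod>i\<in>UNIV. X $ i $ \<pi> i) = 0"
    by (intro prod_zero) auto
  then show ?thesis
    using K by (simp del: prod_zero_iff)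
next
  case True
  have \<pi>_off: "\<pi> i \<noteq> j0" if "i \<noteq> j0" for i
    using that True perm by (metis permutes_inj injD)
  have "\<bar>\<Prod>i\<in>UNIV. X $ i $ \<pi> i\<bar> = \<bar>X $ j0 $ j0\<bar> * (\<Prod>i\<in>UNIV - {j0}. \<bar>X $ i $ \<pi> i\<bar>)"
    using True by (simp add: prod.remove[of UNIV j0] abs_mult abs_prod)
  also have "(\<Prod>i\<in>UNIV - {j0}. \<bar>X $ i $ \<pi> i\<bar>) \<le> (\<Prod>i\<in>UNIV - {j0}. K)"
    by (intro prod_mono) (use bound \<pi>_off in auto)
  also have "(\<Prod>i\<in>UNIV - {j0}. K) = K ^ (CARD('n) - 1)"
    by (simp add: card_Diff_singleton)
  finally show ?thesis
    by (simp add: mult_left_mono)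
qed

lemma abs_det_le_by_column:
  fixes X :: "real^'n^'n"
  assumes col: "\<And>i. i \<noteq> j0 \<Longrightarrow> X $ i $ j0 = 0"
    and bound: "\<And>i j. i \<noteq> j0 \<Longrightarrow> j \<noteq> j0 \<Longrightarrow> \<bar>X $ i $ j\<bar> \<le> K" and K: "K \<ge> 0"
  shows "\<bar>det X\<bar> \<le> fact CARD('n) * (\<bar>X $ j0 $ j0\<bar> * K ^ (CARD('n) - 1))"
proof -
  have sign: "\<bar>real_of_int (sign \<pi>)\<bar> = 1" for \<pi> :: "'n \<Rightarrow> 'n"
    by (simp add: sign_def)
  have "\<bar>det X\<bar> \<le> (\<Sum>\<pi>\<in>{\<pi>. \<pi> permutes UNIV}. \<bar>\<Prod>i\<in>UNIV. X $ i $ \<pi> i\<bar>)"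
    unfolding det_def by (rule order_trans[OF sum_abs]) (simp add: abs_mult sign)
  also have "\<dots> \<le> (\<Sum>\<pi>\<in>{\<pi>. \<pi> permutes (UNIV::'n set)}. \<bar>X $ j0 $ j0\<bar> * K ^ (CARD('n) - 1))"
    by (intro sum_mono abs_prod_permutation_le col bound K) simp
  finally show ?thesis
    by (simp add: card_permutations)
qed

lemma abs_det_power_le:
  fixes M :: "real^'n^'n"
  assumes p: "p \<ge> 1" and card: "CARD('n) \<ge> 2" and rows: "M *v vec 1 = \<mu> *\<^sub>R vec 1"
  shows "\<bar>det M\<bar> ^ m
    \<le> fact CARD('n) * real CARD('n) ^ (CARD('n) - 1) * (\<bar>\<mu>\<bar> * tau p M ^ (CARD('n) - 1)) ^ m"
proof -
  obtain j0 :: 'n where True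
    by blast
  define N where "N = matpow M m"
  define X where "X = shear j0 (-1) ** N ** shear j0 1"
  have N_rows: "N *v vec 1 = (\<mu> ^ m) *\<^sub>R vec 1"
    unfolding N_def by (rule matpow_mult_eigenvector[OF rows])
  have bound: "\<bar>X $ i $ j\<bar> \<le> tau p M ^ m * real CARD('n)" if "i \<noteq> j0" "j \<noteq> j0" for i j
  proof -
    define y where "y = axis i 1 - axis j0 (1::real)"
    have "\<bar>X $ i $ j\<bar> = \<bar>(transpose N *v y) $ j\<bar>"
      unfolding y_def transpose_mult_axis_diff X_def shear_conjugate_components(3)[OF N_rows that]
      by (simp add: row_def)
    also have "\<dots> \<le> lpnorm p (transpose N *v y)"
      by (rule abs_component_le_lpnorm[OF p])
    also have "\<dots> \<le> tau p M ^ m * lpnorm p y"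
      unfolding N_def
      by (rule lpnorm_transpose_matpow_le_tau_power[OF p card rows])
        (use that in \<open>simp add: y_def axis_def sum_subtractf\<close>)
    also have "\<dots> \<le> tau p M ^ m * (real CARD('n) * 1)"
      by (intro mult_left_mono lpnorm_le_card_mult[OF p] zero_le_power tau_nonneg[OF p card])
        (simp add: y_def axis_def)
    finally show ?thesis
      by simp
  qed
  have "\<bar>det M\<bar> ^ m = \<bar>det X\<bar>"
    by (simp add: X_def det_conjugate shear_mult_shear shear_zero N_def det_matpow power_abs)
  also have "\<dots> \<le> fact CARD('n) * (\<bar>X $ j0 $ j0\<bar> * (tau p M ^ m * real CARD('n)) ^ (CARD('n) - 1))"
    by (rule abs_det_le_by_column)
      (use shear_conjugate_components[OF N_rows] bound tau_nonneg[OF p card] in \<open>simp_all add: X_def\<close>)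
  also have "\<dots> = fact CARD('n) * real CARD('n) ^ (CARD('n) - 1) * (\<bar>\<mu>\<bar> * tau p M ^ (CARD('n) - 1)) ^ m"
    using shear_conjugate_components(1)[OF N_rows]
    by (simp add: X_def power_mult_distrib power_abs flip: power_mult) (simp add: mult_ac)
  finally show ?thesis .
qed

lemma le_of_power_le_const_mult_power:
  fixes a b C :: real
  assumes b: "b \<ge> 0" and le: "\<And>m. a ^ m \<le> C * b ^ m"
  shows "a \<le> b"
proof (rule ccontr)
  assume "\<not> a \<le> b"
  then have "b < a"
    by simp
  show False
  proof (cases "b = 0")
    case True
    then show False
      using le[of 1] \<open>b < a\<close> by simp
  next
    case False
    with b have "b > 0"
      by simp
    with \<open>b < a\<close> obtain m where "C < (a / b) ^ m"
      using real_arch_pow[of "a / b" C] by auto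
    with \<open>b > 0\<close> have "C * b ^ m < a ^ m"
      by (simp add: power_divide field_simps)
    with le[of m] show False
      by simp
  qed
qed

theorem abs_det_le_tau_power:
  fixes M :: "real^'n^'n"
  assumes p: "p \<ge> 1" and card: "CARD('n) \<ge> 2" and rows: "M *v vec 1 = \<mu> *\<^sub>R vec 1"
  shows "\<bar>det M\<bar> \<le> \<bar>\<mu>\<bar> * tau p M ^ (CARD('n) - 1)"
  by (rule le_of_power_le_const_mult_power[OF _ abs_det_power_le[OF p card rows]])
    (simp add: tau_nonneg[OF p card])

lemma le_mult_powr_of_power_le:
  fixes a c t :: real
  assumes "a \<ge> 0" "c \<ge> 0" "t \<ge> 0" "k \<ge> 1" "d \<ge> 1" and le: "a ^ k \<le> c ^ k * t ^ d"
  shows "a \<le> c * t powr (real d / real k)"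
proof -
  have "t ^ d = (t powr (real d / real k)) ^ k"
  proof (cases "t = 0")
    case True
    then show ?thesis
      using assms by (simp add: zero_power)
  next
    case False
    then have "(t powr (real d / real k)) ^ k = t powr real d"
      using assms by (simp add: powr_power)
    then show ?thesis
      using False assms by (simp add: powr_realpow)
  qed
  with le have "a ^ k \<le> (c * t powr (real d / real k)) ^ k"
    by (simp add: power_mult_distrib)
  moreover obtain k' where "k = Suc k'"
    using assms(4) by (cases k) auto
  ultimately show ?thesis
    using assms by (metis power_le_imp_le_base mult_nonneg_nonneg powr_ge_zero)
qed

lemma diagm_mult_vector: "diagm a *v x = a * x"
proof -
  have "(diagm a *v x) $ i = (\<Sum>j\<in>UNIV. if j = i then a $ i * x $ i else 0)" for i
    unfolding diagm_def matrix_vector_mult_def vec_lambda_beta by (rule sum.cong) auto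
  then show ?thesis
    by (simp add: vec_eq_iff)
qed

lemma diagm_mult_diagm: "diagm a ** diagm b = diagm (a * b)"
proof -
  have "(diagm a ** diagm b) $ i $ j = (\<Sum>l\<in>UNIV. if l = i then diagm (a * b) $ i $ j else 0)" for i j
    unfolding diagm_def matrix_matrix_mult_def vec_lambda_beta by (rule sum.cong) auto
  then show ?thesis
    by (simp add: vec_eq_iff)
qed

lemma diagm_one: "diagm 1 = mat 1"
  by (simp add: vec_eq_iff diagm_def mat_def)

lemma matrix_inv_mult_left:
  fixes A :: "'a::semiring_1^'n^'m"
  assumes "invertible A"
  shows "matrix_inv A ** A = mat 1"
  using someI_ex[OF assms[unfolded invertible_def]] by (simp add: matrix_inv_def)

lemma invertible_diagm:
  assumes "\<forall>i. v $ i \<noteq> 0"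
  shows "invertible (diagm v)"
  unfolding invertible_def
proof (intro exI conjI)
  have "v * (\<chi> i. inverse (v $ i)) = 1" "(\<chi> i. inverse (v $ i)) * v = 1"
    using assms by (simp_all add: vec_eq_iff)
  then show "diagm v ** diagm (\<chi> i. inverse (v $ i)) = mat 1"
    and "diagm (\<chi> i. inverse (v $ i)) ** diagm v = mat 1"
    by (simp_all add: diagm_mult_diagm diagm_one)
qed

lemma conjugate_mult_vector_eigen:
  assumes "P ** Q = mat 1" and "N *v (Q *v w) = \<mu> *\<^sub>R (Q *v w)"
  shows "(P ** N ** Q) *v w = \<mu> *\<^sub>R (w :: real^'n)"
proof -
  have "(P ** N ** Q) *v w = P *v (N *v (Q *v w))"
    by (simp add: matrix_vector_mul_assoc matrix_mul_assoc)
  also have "\<dots> = \<mu> *\<^sub>R ((P ** Q) *v w)"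
    using assms(2) by (simp add: matrix_vector_mult_scaleR matrix_vector_mul_assoc)
  finally show ?thesis
    using assms(1) by simp
qed

theorem corollary4:
  fixes A :: "real^'n^'n" and v :: "real^'n" and lam :: real
  assumes n2: "CARD('n) \<ge> 2"
    and eig: "A *v v = lam *\<^sub>R v"
    and nz: "\<forall>i. v $ i \<noteq> 0"
  shows "(\<forall>p::enat. p \<ge> 1 \<longrightarrow> (\<forall>k::nat. k \<ge> 1 \<longrightarrow>
            \<bar>det A\<bar> \<le> \<bar>lam\<bar> * (tau p (matrix_inv (diagm v) ** matpow A k ** diagm v))
                                powr ((real CARD('n) - 1) / real k)))
       \<and> (\<forall>p::enat. p \<ge> 1 \<longrightarrow>
            \<bar>det A\<bar> \<le> \<bar>lam\<bar> * tau p (matrix_inv (diagm v) ** matpow A (CARD('n) - 1) ** diagm v))"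
proof -
  define M where "M k = matrix_inv (diagm v) ** matpow A k ** diagm v" for k
  have inv: "matrix_inv (diagm v) ** diagm v = mat 1"
    by (rule matrix_inv_mult_left[OF invertible_diagm[OF nz]])
  have det_M: "det (M k) = det A ^ k" for k
    by (simp add: M_def det_conjugate[OF inv] det_matpow)
  have "M k *v vec 1 = (lam ^ k) *\<^sub>R vec 1" for k
    unfolding M_def using inv
    by (rule conjugate_mult_vector_eigen) (simp add: diagm_mult_vector matpow_mult_eigenvector[OF eig])
  then have power_le: "\<bar>det A\<bar> ^ k \<le> \<bar>lam\<bar> ^ k * tau p (M k) ^ (CARD('n) - 1)" if "p \<ge> 1" for p k
    using abs_det_le_tau_power[OF that n2] det_M by (metis power_abs)
  have root_le: "\<bar>det A\<bar> \<le> \<bar>lam\<bar> * tau p (M k) powr ((real CARD('n) - 1) / real k)"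
    if "p \<ge> 1" "k \<ge> 1" for p k
    using le_mult_powr_of_power_le[OF _ _ tau_nonneg[OF that(1) n2] that(2) _ power_le[OF that(1)]] n2
    by (simp add: of_nat_diff)
  moreover have "tau p (M (CARD('n) - 1)) powr ((real CARD('n) - 1) / real (CARD('n) - 1))
      = tau p (M (CARD('n) - 1))" if "p \<ge> 1" for p
    using n2 tau_nonneg[OF that n2] by (simp add: of_nat_diff)
  ultimately show ?thesis
    unfolding M_def[symmetric] using root_le[of _ "CARD('n) - 1"] n2 by auto
qed

end
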